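(* In the standing setup with $A$ generic, let $g_i=B_i^{\rm T}f_0$ ($i=1,2,3$) and for $\varepsilon\ne 0$ let $\widetilde H(x,\varepsilon)=\varepsilon^{-1}x^{\rm T}J(I-\varepsilon f_0'(x))^{-1}x$ and $\widetilde K_i(x,\varepsilon)=\varepsilon^{-1}x^{\rm T}J(I-\varepsilon g_i'(x))^{-1}x$. Then $\widetilde K_1+\widetilde K_2+\widetilde K_3=\widetilde H$.
   Context: Standing setup: $J=\begin{pmatrix}0&I_3\\-I_3&0\end{pmatrix}$ ($6\times6$). $A$ is a fixed real $6\times 6$ skew-Hamiltonian matrix ($A^{\rm T}J=JA$). $H_0$ is a homogeneous cubic polynomial on $\mathbb R^6$ with $A\nabla^2H_0(x)=\nabla^2H_0(x)A^{\rm T}$ for all $x$ ($\nabla^2$ = Hesse matrix), $H_1,H_2$ homogeneous cubic polynomials with $\nabla H_1=A\nabla H_0$, $\nabla H_2=A\nabla H_1$, $f_i=J\nabla H_i$, primes denote Jacobi matrices. Genericity: the characteristic polynomial of $A$ (a square of a cubic) has three pairwise distinct roots $\lambda_1,\lambda_2,\lambda_3$, each a double eigenvalue. $B_i=\alpha_iI+\beta_iA+\gamma_iA^2$ ($i=1,2,3$), where $\alpha_i+\beta_i\lambda+\gamma_i\lambda^2$ is the unique polynomial of degree $\le2$ equal to $-1$ at $\lambda_i$ and to $1$ at the other two eigenvalues; then $B_i^2=I$ and $B_1+B_2+B_3=I$. *)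

theory Defs
  imports "HOL-Analysis.Analysis"
begin

definition Jmat :: "real^6^6" where
  "Jmat = (\<chi> i j. if (i, j) \<in> {(0,3),(1,4),(2,5)} then 1
                   else if (i, j) \<in> {(3,0),(4,1),(5,2)} then -1 else 0)"

definition homog_cubic :: "(real^6 \<Rightarrow> real) \<Rightarrow> bool" where
  "homog_cubic H \<longleftrightarrow> (\<exists>c :: 6 \<Rightarrow> 6 \<Rightarrow> 6 \<Rightarrow> real.
      \<forall>x. H x = (\<Sum>i\<in>UNIV. \<Sum>j\<in>UNIV. \<Sum>k\<in>UNIV. c i j k * x$i * x$j * x$k))"

definition grad :: "(real^'n \<Rightarrow> real) \<Rightarrow> real^'n \<Rightarrow> real^'n" where
  "grad H x = (\<chi> i. frechet_derivative H (at x) (axis i 1))"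

definition jacobi :: "(real^'n \<Rightarrow> 'a::real_normed_vector^'m) \<Rightarrow> real^'n \<Rightarrow> 'a^'n^'m" where
  "jacobi f x = (\<chi> i j. frechet_derivative f (at x) (axis j 1) $ i)"

definition hesse :: "(real^'n \<Rightarrow> real) \<Rightarrow> real^'n \<Rightarrow> real^'n^'n" where
  "hesse H x = jacobi (grad H) x"

definition cvec :: "real^'n \<Rightarrow> complex^'n" where
  "cvec x = (\<chi> i. complex_of_real (x$i))"

definition cmat :: "real^'n^'m \<Rightarrow> complex^'n^'m" where
  "cmat M = (\<chi> i j. complex_of_real (M$i$j))"

definition qform :: "'a::comm_ring_1^'n^'n \<Rightarrow> 'a^'n \<Rightarrow> 'a" where
  "qform M x = (\<Sum>i\<in>UNIV. x$i * (M *v x)$i)"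

end

theory Submission
  imports Defs "HOL-Computational_Algebra.Polynomial"
begin

text \<open>
  Let \<open>S\<close> be the Hessian of \<open>H\<^sub>0\<close> at \<open>x\<close>, \<open>M = J S = f\<^sub>0'(x)\<close> and \<open>C\<^sub>i = B\<^sub>i\<^sup>T\<close>, so that
  \<open>g\<^sub>i'(x) = C\<^sub>i M\<close>. Because \<open>A\<close> is skew-Hamiltonian, \<open>J (z I - A)\<close> is skew-symmetric, and its
  Pfaffian adjugate \<open>R(z)\<close> satisfies \<open>R(z) (z I - A) = p(z) I\<close> with \<open>p(z) = Pf (J (z I - A))\<close>. So the
  cubic \<open>p\<close> annihilates \<open>A\<close> and vanishes at the three eigenvalues; hence the interpolation
  polynomials give involutions \<open>C\<^sub>i\<close> with \<open>C\<^sub>1 + C\<^sub>2 + C\<^sub>3 = I\<close>, each commuting with \<open>M\<close>.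

  On the \<open>\<plusminus>1\<close>-eigenspaces of \<open>C\<^sub>i\<close> the resolvent \<open>(I - \<epsilon> C\<^sub>i M)\<^sup>-\<^sup>1\<close> agrees with
  \<open>(I \<mp> \<epsilon> M)\<^sup>-\<^sup>1\<close>, and summing over \<open>i\<close> gives
  \<open>\<Sum>\<^sub>i (I - \<epsilon> C\<^sub>i M)\<^sup>-\<^sup>1 = (I - \<epsilon> M)\<^sup>-\<^sup>1 + [(I - \<epsilon> M)\<^sup>-\<^sup>1 + (I + \<epsilon> M)\<^sup>-\<^sup>1]\<close>.
  As \<open>M\<close> is Hamiltonian, \<open>J\<close> times the bracket is skew-symmetric, so it does not contribute to
  the quadratic form \<open>x\<^sup>T J (\<dots>) x\<close>.
\<close>

section \<open>Complex square matrices as a ring\<close>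

text \<open>Wrapping \<open>complex^'n^'n\<close> in a type lets \<open>**\<close> be the multiplication of a \<open>ring_1\<close>,
  so matrix identities can be proved with the ring automation.\<close>

typedef 'n sqm = "UNIV :: (complex^'n::finite^'n) set" morphisms mat_of sqm
  by auto

setup_lifting type_definition_sqm

lemma matrix_add_rdistrib: "(A + B) ** C = A ** C + B ** (C :: 'a::semiring_1^_^_)"
  by (vector matrix_matrix_mult_def sum.distrib[symmetric] field_simps)

instantiation sqm :: (finite) ring_1
begin
lift_definition zero_sqm :: "'a sqm" is 0 .
lift_definition one_sqm :: "'a sqm" is "mat 1" .
lift_definition plus_sqm :: "'a sqm \<Rightarrow> 'a sqm \<Rightarrow> 'a sqm" is "(+)" .
lift_definition minus_sqm :: "'a sqm \<Rightarrow> 'a sqm \<Rightarrow> 'a sqm" is "(-)" .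
lift_definition uminus_sqm :: "'a sqm \<Rightarrow> 'a sqm" is uminus .
lift_definition times_sqm :: "'a sqm \<Rightarrow> 'a sqm \<Rightarrow> 'a sqm" is "(**)" .
instance
proof
  fix a b c :: "'a sqm"
  show "a * b * c = a * (b * c)" by transfer (simp add: matrix_mul_assoc)
  show "a + b + c = a + (b + c)" by transfer (rule add.assoc)
  show "a + b = b + a" by transfer (rule add.commute)
  show "0 + a = a" by transfer simp
  show "1 * a = a" by transfer simp
  show "a * 1 = a" by transfer simp
  show "- a + a = 0" by transfer simp
  show "a - b = a + - b" by transfer simp
  show "(a + b) * c = a * c + b * c" by transfer (rule matrix_add_rdistrib)
  show "a * (b + c) = a * b + a * c" by transfer (rule matrix_add_ldistrib)
  show "(0 :: 'a sqm) \<noteq> 1" by transfer (simp add: vec_eq_iff mat_def)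
qed
end

lift_definition scal :: "complex \<Rightarrow> 'n::finite sqm" is mat .
lift_definition sqm_transpose :: "'n::finite sqm \<Rightarrow> 'n sqm" is transpose .

lemma sqm_eq_iff: "a = b \<longleftrightarrow> mat_of a = mat_of b"
  by (simp add: mat_of_inject)

lemma mat_of_ops [simp]:
  "mat_of (a * b) = mat_of a ** mat_of b" "mat_of (a + b) = mat_of a + mat_of b"
  "mat_of (a - b) = mat_of a - mat_of b" "mat_of (- a) = - mat_of a"
  "mat_of 1 = mat 1" "mat_of 0 = 0" "mat_of (scal c) = mat c" "mat_of (sqm_transpose a) = transpose (mat_of a)"
  by (transfer; simp)+

lemma mat_of_sqm [simp]: "mat_of (sqm X) = X"
  by (simp add: sqm_inverse)

lemma sqm_ops:
  "sqm (X ** Y) = sqm X * sqm Y" "sqm (X + Y) = sqm X + sqm Y" "sqm (X - Y) = sqm X - sqm Y"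
  "sqm (- X) = - sqm X" "sqm (mat c) = scal c" "sqm (transpose X) = sqm_transpose (sqm X)"
  by (simp_all add: sqm_eq_iff sqm_inverse)

lemma mat_mult_left: "mat c ** X = (\<chi> i j. c * X$i$j)"
  for X :: "'a::comm_semiring_1^'n^'m"
  unfolding matrix_matrix_mult_def mat_def
  by (auto simp: vec_eq_iff if_distrib if_distribR sum.delta'[OF finite] sum.delta[OF finite] cong: if_cong)

lemma mat_mult_right: "X ** mat c = (\<chi> i j. X$i$j * c)"
  for X :: "'a::comm_semiring_1^'n^'m"
  unfolding matrix_matrix_mult_def mat_def
  by (auto simp: vec_eq_iff if_distrib if_distribR sum.delta'[OF finite] sum.delta[OF finite] cong: if_cong)

lemma scal_mult_commute: "scal c * a = a * scal c"
  by transfer (simp add: mat_mult_left mat_mult_right mult.commute)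

lemma scal_left_commute: "a * (scal c * b) = scal c * (a * b)"
  by (metis mult.assoc scal_mult_commute)

lemma scal_mult: "scal (c * d) = scal c * scal d"
  by transfer (simp add: mat_mult_left, simp add: vec_eq_iff mat_def)

lemma scal_add: "scal (c + d) = scal c + scal d"
  by transfer (simp add: vec_eq_iff mat_def)

lemma scal_diff: "scal (c - d) = scal c - scal d"
  by transfer (simp add: vec_eq_iff mat_def)

lemma scal_minus: "scal (- c) = - scal c"
  by transfer (simp add: vec_eq_iff mat_def)

lemma scal_1 [simp]: "scal 1 = 1"
  by transfer simp

lemma scal_0 [simp]: "scal 0 = 0"
  by transfer simp

lemma sqm_transpose_mult: "sqm_transpose (a * b) = sqm_transpose b * sqm_transpose a"
  by transfer (rule matrix_transpose_mul)

lemma sqm_transpose_add: "sqm_transpose (a + b) = sqm_transpose a + sqm_transpose b"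
  by transfer (simp add: vec_eq_iff transpose_def)

lemma sqm_transpose_scal [simp]: "sqm_transpose (scal c) = scal c"
  by transfer (rule transpose_mat)

lemma sqm_transpose_0 [simp]: "sqm_transpose 0 = 0"
  using sqm_transpose_scal[of 0] by simp

lemma sqm_transpose_1 [simp]: "sqm_transpose 1 = 1"
  using sqm_transpose_scal[of 1] by simp

lemma sqm_inverse_commute: "u * v = (1 :: 'n::finite sqm) \<Longrightarrow> v * u = 1"
  by transfer (rule matrix_left_right_inverse1)

section \<open>Scalar polynomials evaluated at a matrix\<close>

definition peval :: "complex poly \<Rightarrow> 'n::finite sqm \<Rightarrow> 'n sqm" where
  "peval p a = fold_coeffs (\<lambda>c r. scal c + a * r) p 0"

lemma peval_0 [simp]: "peval 0 a = 0"
  by (simp add: peval_def)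

lemma peval_pCons: "peval (pCons c p) a = scal c + a * peval p a"
  by (cases "c = 0 \<and> p = 0")
    (auto simp: peval_def fold_coeffs_pCons_coeff_not_0_eq fold_coeffs_pCons_not_0_0_eq)

lemma peval_const: "peval [:c:] a = scal c"
  by (simp add: peval_pCons)

lemma peval_1 [simp]: "peval 1 a = 1"
  by (simp add: one_pCons peval_const)

lemma peval_add: "peval (p + q) a = peval p a + peval q a"
proof (induction p arbitrary: q)
  case (pCons c p)
  then show ?case by (cases q) (simp add: peval_pCons scal_add algebra_simps)
qed simp

lemma peval_diff: "peval (p - q) a = peval p a - peval q a"
  using peval_add[of "p - q" q a] by simp

lemma peval_smult: "peval (smult c p) a = scal c * peval p a"
  by (induction p) (simp_all add: peval_pCons scal_mult distrib_left scal_left_commute)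

lemma peval_mult: "peval (p * q) a = peval p a * peval q a"
  by (induction p) (simp_all add: peval_pCons peval_add peval_smult algebra_simps)

lemma peval_commute: "a * peval p a = peval p a * a"
proof (induction p)
  case (pCons c p)
  then show ?case
    by (simp add: peval_pCons distrib_left distrib_right scal_mult_commute flip: mult.assoc)
qed simp

lemma peval_intertwine:
  assumes "a * s = s * b"
  shows "peval p a * s = s * peval p b"
proof (induction p)
  case (pCons c p)
  have "peval (pCons c p) a * s = scal c * s + a * (peval p a * s)"
    by (simp add: peval_pCons algebra_simps)
  also have "\<dots> = s * scal c + (a * s) * peval p b"
    by (simp add: pCons.IH scal_mult_commute mult.assoc)
  also have "\<dots> = s * peval (pCons c p) b"
    by (simp add: assms peval_pCons algebra_simps)
  finally show ?case .
qed simp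

lemma sqm_transpose_peval: "sqm_transpose (peval p a) = peval p (sqm_transpose a)"
  by (induction p) (simp_all add: peval_pCons sqm_transpose_add sqm_transpose_mult peval_commute)

lemma peval_eq_if_agree_on_roots:
  fixes m p q :: "complex poly"
  assumes "peval m a = 0" "m \<noteq> 0" "finite L" "degree m \<le> card L"
    and "\<And>z. z \<in> L \<Longrightarrow> poly m z = 0 \<and> poly p z = poly q z"
  shows "peval p a = peval q a"
proof -
  have "m dvd p - q"
  proof (rule ccontr)
    assume ndvd: "\<not> m dvd p - q"
    define r where "r = (p - q) mod m"
    have "r \<noteq> 0" using ndvd by (simp add: r_def mod_eq_0_iff_dvd)
    have "L \<subseteq> {z. poly r z = 0}"
    proof
      fix z assume "z \<in> L"
      have "p - q = (p - q) div m * m + r" by (simp add: r_def)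
      from arg_cong[OF this, of "\<lambda>f. poly f z"] show "z \<in> {z. poly r z = 0}"
        using assms(5)[OF \<open>z \<in> L\<close>] by simp
    qed
    then have "card L \<le> card {z. poly r z = 0}"
      using \<open>r \<noteq> 0\<close> by (intro card_mono poly_roots_finite)
    also have "\<dots> \<le> degree r" using \<open>r \<noteq> 0\<close> by (rule card_poly_roots_bound)
    also have "\<dots> < degree m" unfolding r_def using assms(2) ndvd by (rule degree_mod_less_degree)
    finally show False using assms(4) by simp
  qed
  then obtain k where "p - q = m * k" by (rule dvdE)
  then have "peval p a - peval q a = 0"
    by (simp add: assms(1) peval_mult flip: peval_diff)
  then show ?thesis by simp
qed

lemma interpolating_involutions:
  fixes a :: "'n::finite sqm" and p :: "complex poly" and lam al be ga :: "nat \<Rightarrow> complex"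
  assumes "degree p = 3" and "peval p a = 0" and roots: "\<And>k. k \<in> {1,2,3} \<Longrightarrow> poly p (lam k) = 0"
    and distinct: "lam 1 \<noteq> lam 2" "lam 1 \<noteq> lam 3" "lam 2 \<noteq> lam 3"
    and interp: "\<And>i k. i \<in> {1,2,3} \<Longrightarrow> k \<in> {1,2,3} \<Longrightarrow>
        al i + be i * lam k + ga i * (lam k)\<^sup>2 = (if k = i then -1 else 1)"
  defines "b i \<equiv> peval [:al i, be i, ga i:] a"
  shows "i \<in> {1,2,3} \<Longrightarrow> b i * b i = 1" and "b 1 + b 2 + b 3 = 1"
proof -
  have agree: "peval q a = peval r a"
    if "\<And>k. k \<in> {1,2,3} \<Longrightarrow> poly q (lam k) = poly r (lam k)" for q r
  proof (rule peval_eq_if_agree_on_roots)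
    show "peval p a = 0" "p \<noteq> 0" "finite (lam ` {1,2,3})" using assms(1,2) by auto
    show "degree p \<le> card (lam ` {1,2,3})" using assms(1) distinct by simp
  qed (use roots that in auto)
  have poly_b: "poly [:al i, be i, ga i:] (lam k) = (if k = i then -1 else 1)"
    if "i \<in> {1,2,3}" "k \<in> {1,2,3}" for i k
    using interp[OF that] by (simp add: algebra_simps power2_eq_square)
  show "b i * b i = 1" if "i \<in> {1,2,3}"
    unfolding b_def peval_mult[symmetric] peval_1[of a, symmetric]
  proof (rule agree)
    fix k :: nat assume "k \<in> {1,2,3}"
    then show "poly ([:al i, be i, ga i:] * [:al i, be i, ga i:]) (lam k) = poly 1 (lam k)"
      by (simp only: poly_mult poly_b[OF that]) simp
  qed
  show "b 1 + b 2 + b 3 = 1"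
    unfolding b_def peval_add[symmetric] peval_1[of a, symmetric]
  proof (rule agree)
    fix k :: nat assume k: "k \<in> {1,2,3}"
    have "poly ([:al 1, be 1, ga 1:] + [:al 2, be 2, ga 2:] + [:al 3, be 3, ga 3:]) (lam k)
        = poly [:al 1, be 1, ga 1:] (lam k) + poly [:al 2, be 2, ga 2:] (lam k)
          + poly [:al 3, be 3, ga 3:] (lam k)"
      by (simp only: poly_add)
    also have "\<dots> = poly 1 (lam k)"
      using k by (simp add: poly_b[OF _ k] del: poly_pCons) auto
    finally show "poly ([:al 1, be 1, ga 1:] + [:al 2, be 2, ga 2:] + [:al 3, be 3, ga 3:]) (lam k)
        = poly 1 (lam k)" .
  qed
qed

section \<open>An annihilating cubic for skew-Hamiltonian 6 \<times> 6 matrices\<close>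

lemma UNIV_6: "(UNIV::6 set) = {0,1,2,3,4,5}"
proof -
  have "card (UNIV::6 set) = 6" by simp
  moreover have "card ({0,1,2,3,4,5}::6 set) = 6" by simp
  ultimately show ?thesis by (metis card_subset_eq finite subset_UNIV)
qed

lemma sum_UNIV_6: "sum f (UNIV::6 set) = f 0 + f 1 + f 2 + f 3 + f 4 + f 5"
  unfolding UNIV_6 by (simp add: add.assoc)

lemma all_6: "(\<forall>i::6. P i) \<longleftrightarrow> P 0 \<and> P 1 \<and> P 2 \<and> P 3 \<and> P 4 \<and> P 5"
  by (metis UNIV_6 UNIV_I insertE empty_iff)

definition vec6 :: "'a \<Rightarrow> 'a \<Rightarrow> 'a \<Rightarrow> 'a \<Rightarrow> 'a \<Rightarrow> 'a \<Rightarrow> 'a^6" where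
  "vec6 a0 a1 a2 a3 a4 a5 = (\<chi> i. if i = 0 then a0 else if i = 1 then a1 else if i = 2 then a2
     else if i = 3 then a3 else if i = 4 then a4 else a5)"

lemma vec6_nth [simp]:
  "vec6 a0 a1 a2 a3 a4 a5 $ 0 = a0" "vec6 a0 a1 a2 a3 a4 a5 $ 1 = a1"
  "vec6 a0 a1 a2 a3 a4 a5 $ 2 = a2" "vec6 a0 a1 a2 a3 a4 a5 $ 3 = a3"
  "vec6 a0 a1 a2 a3 a4 a5 $ 4 = a4" "vec6 a0 a1 a2 a3 a4 a5 $ 5 = a5"
  by (simp_all add: vec6_def)

text \<open>For a skew-symmetric \<open>Y\<close>, the Pfaffian adjugate of \<open>z J - Y\<close> is
  \<open>z\<^sup>2 J + z pfaff_adj1 Y + pfaff_adj0 Y\<close> and its Pfaffian is \<open>poly (pfaff_char Y) z\<close>;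
  \<open>pf4 Y a b c d\<close> is the Pfaffian of the principal 4 \<times> 4 submatrix on the indices \<open>a, b, c, d\<close>.
  The identity \<open>adj(X) X = Pf(X) I\<close> for \<open>X = z J - Y\<close>, split by powers of \<open>z\<close>, gives the
  identities below.\<close>

definition pf4 :: "complex^6^6 \<Rightarrow> 6 \<Rightarrow> 6 \<Rightarrow> 6 \<Rightarrow> 6 \<Rightarrow> complex" where
  "pf4 Y a b c d = Y$a$b * Y$c$d - Y$a$c * Y$b$d + Y$a$d * Y$b$c"

definition pfaff_adj0 :: "complex^6^6 \<Rightarrow> complex^6^6" where
  "pfaff_adj0 Y = vec6
     (vec6 0 (- pf4 Y 2 3 4 5) (pf4 Y 1 3 4 5) (- pf4 Y 1 2 4 5) (pf4 Y 1 2 3 5) (- pf4 Y 1 2 3 4))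
     (vec6 (pf4 Y 2 3 4 5) 0 (- pf4 Y 0 3 4 5) (pf4 Y 0 2 4 5) (- pf4 Y 0 2 3 5) (pf4 Y 0 2 3 4))
     (vec6 (- pf4 Y 1 3 4 5) (pf4 Y 0 3 4 5) 0 (- pf4 Y 0 1 4 5) (pf4 Y 0 1 3 5) (- pf4 Y 0 1 3 4))
     (vec6 (pf4 Y 1 2 4 5) (- pf4 Y 0 2 4 5) (pf4 Y 0 1 4 5) 0 (- pf4 Y 0 1 2 5) (pf4 Y 0 1 2 4))
     (vec6 (- pf4 Y 1 2 3 5) (pf4 Y 0 2 3 5) (- pf4 Y 0 1 3 5) (pf4 Y 0 1 2 5) 0 (- pf4 Y 0 1 2 3))
     (vec6 (pf4 Y 1 2 3 4) (- pf4 Y 0 2 3 4) (pf4 Y 0 1 3 4) (- pf4 Y 0 1 2 4) (pf4 Y 0 1 2 3) 0)"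

definition pfaff_adj1 :: "complex^6^6 \<Rightarrow> complex^6^6" where
  "pfaff_adj1 Y = vec6
     (vec6 0 (Y$3$4) (Y$3$5) (- Y$1$4 - Y$2$5) (Y$1$3) (Y$2$3))
     (vec6 (- Y$3$4) 0 (Y$4$5) (Y$0$4) (- Y$0$3 - Y$2$5) (Y$2$4))
     (vec6 (- Y$3$5) (- Y$4$5) 0 (Y$0$5) (Y$1$5) (- Y$0$3 - Y$1$4))
     (vec6 (Y$1$4 + Y$2$5) (- Y$0$4) (- Y$0$5) 0 (Y$0$1) (Y$0$2))
     (vec6 (- Y$1$3) (Y$0$3 + Y$2$5) (- Y$1$5) (- Y$0$1) 0 (Y$1$2))
     (vec6 (- Y$2$3) (- Y$2$4) (Y$0$3 + Y$1$4) (- Y$0$2) (- Y$1$2) 0)"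

definition pfaff_char :: "complex^6^6 \<Rightarrow> complex poly" where
  "pfaff_char Y =
     [: - Y$0$1 * pf4 Y 2 3 4 5 + Y$0$2 * pf4 Y 1 3 4 5 - Y$0$3 * pf4 Y 1 2 4 5
          + Y$0$4 * pf4 Y 1 2 3 5 - Y$0$5 * pf4 Y 1 2 3 4,
        Y$0$1 * Y$3$4 + Y$0$2 * Y$3$5 - Y$0$3 * Y$1$4 - Y$0$3 * Y$2$5 + Y$0$4 * Y$1$3
          + Y$0$5 * Y$2$3 + Y$1$2 * Y$4$5 - Y$1$4 * Y$2$5 + Y$1$5 * Y$2$4,
        Y$0$3 + Y$1$4 + Y$2$5,
        -1 :]"

lemma cmat_Jmat_nth: "cmat Jmat $ i $ j = (if (i, j) \<in> {(0,3),(1,4),(2,5)} then 1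
                   else if (i, j) \<in> {(3,0),(4,1),(5,2)} then -1 else 0)"
  by (simp add: cmat_def Jmat_def)

lemma pfaffian_adjugate_identities:
  fixes Y :: "complex^6^6"
  assumes skew: "transpose Y = - Y"
  shows "- (pfaff_adj0 Y ** Y) = mat (coeff (pfaff_char Y) 0)"
    and "pfaff_adj0 Y ** cmat Jmat - pfaff_adj1 Y ** Y = mat (coeff (pfaff_char Y) 1)"
    and "pfaff_adj1 Y ** cmat Jmat - cmat Jmat ** Y = mat (coeff (pfaff_char Y) 2)"
proof -
  have Y: "Y$j$i = - Y$i$j" for i j
    using arg_cong[OF skew, of "\<lambda>M. M $ i $ j"] by (simp add: transpose_def)
  have d: "Y$i$i = 0" for i using Y[of i i] by simp
  have s: "Y$1$0 = - Y$0$1" "Y$2$0 = - Y$0$2" "Y$3$0 = - Y$0$3" "Y$4$0 = - Y$0$4" "Y$5$0 = - Y$0$5"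
     "Y$2$1 = - Y$1$2" "Y$3$1 = - Y$1$3" "Y$4$1 = - Y$1$4" "Y$5$1 = - Y$1$5"
     "Y$3$2 = - Y$2$3" "Y$4$2 = - Y$2$4" "Y$5$2 = - Y$2$5"
     "Y$4$3 = - Y$3$4" "Y$5$3 = - Y$3$5" "Y$5$4 = - Y$4$5" by (rule Y)+
  note defs = pfaff_adj0_def pfaff_adj1_def pfaff_char_def pf4_def cmat_Jmat_nth d s
  show "- (pfaff_adj0 Y ** Y) = mat (coeff (pfaff_char Y) 0)"
    unfolding vec_eq_iff all_6 matrix_matrix_mult_def mat_def vector_uminus_component vec_lambda_beta sum_UNIV_6
    by (simp add: defs algebra_simps)
  show "pfaff_adj0 Y ** cmat Jmat - pfaff_adj1 Y ** Y = mat (coeff (pfaff_char Y) 1)"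
    unfolding vec_eq_iff all_6 matrix_matrix_mult_def mat_def vector_minus_component vec_lambda_beta sum_UNIV_6
    by (simp add: defs algebra_simps)
  show "pfaff_adj1 Y ** cmat Jmat - cmat Jmat ** Y = mat (coeff (pfaff_char Y) 2)"
    unfolding vec_eq_iff all_6 matrix_matrix_mult_def mat_def vector_minus_component vec_lambda_beta sum_UNIV_6
    by (simp add: defs numeral_2_eq_2 algebra_simps)
qed

lemma cmat_Jmat_squared: "cmat Jmat ** cmat Jmat = - mat 1"
  by (simp add: vec_eq_iff all_6 matrix_matrix_mult_def sum_UNIV_6 cmat_Jmat_nth mat_def)

lemma transpose_cmat_Jmat: "transpose (cmat Jmat) = - cmat Jmat"
  by (simp add: vec_eq_iff all_6 transpose_def cmat_Jmat_nth)

lemma pfaffian_adjugate_resolvent: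
  fixes P0 P1 j a :: "'n::finite sqm"
  assumes h0: "- (P0 * (j * a)) = scal t0"
    and h1: "P0 * j - P1 * (j * a) = scal t1"
    and h2: "P1 * j - j * (j * a) = scal t2"
    and jj: "j * j = -1"
  shows "peval [:t0, t1, t2, -1:] a = 0"
    and "(scal (z * z) * j + scal z * P1 + P0) * j * (scal z - a) = scal (poly [:t0, t1, t2, -1:] z)"
proof -
  have jjx: "j * (j * x) = - x" for x
    by (simp add: jj flip: mult.assoc)
  have "peval [:t0, t1, t2, -1:] a = scal t0 + scal t1 * a + scal t2 * (a * a) - a * (a * a)"
    by (simp add: peval_pCons scal_minus algebra_simps scal_mult_commute)
  also have "\<dots> = 0"
    unfolding h0[symmetric] h1[symmetric] h2[symmetric] by (simp add: algebra_simps jjx)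
  finally show "peval [:t0, t1, t2, -1:] a = 0" .
  define X where "X = (scal z * scal z * j + scal z * P1 + P0) * j"
  have "poly [:t0, t1, t2, -1:] z = t0 + z * t1 + (z * z) * t2 - (z * z) * z"
    by (simp add: algebra_simps)
  then have "scal (poly [:t0, t1, t2, -1:] z)
      = scal t0 + scal z * scal t1 + scal z * scal z * scal t2 - scal z * scal z * scal z"
    by (simp add: scal_add scal_diff scal_mult)
  also have "\<dots> = - (P0 * (j * a)) + scal z * (P0 * j - P1 * (j * a))
      + scal z * scal z * (P1 * j - j * (j * a)) + scal z * scal z * scal z * (j * j)"
    by (simp add: h0 h1 h2 jj)
  also have "\<dots> = scal z * X - X * a"
    by (simp add: X_def algebra_simps)
  also have "\<dots> = X * (scal z - a)"
    by (simp add: right_diff_distrib scal_mult_commute)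
  finally show "(scal (z * z) * j + scal z * P1 + P0) * j * (scal z - a) = scal (poly [:t0, t1, t2, -1:] z)"
    by (simp add: X_def scal_mult)
qed


lemma skew_hamiltonian_annihilating_cubic:
  fixes A :: "complex^6^6"
  assumes skew_ham: "transpose A ** cmat Jmat = cmat Jmat ** A"
  obtains p where "degree p = 3" and "peval p (sqm A) = 0"
    and "\<And>z. poly p z \<noteq> 0 \<Longrightarrow> invertible (mat z - A)"
proof
  define Y where "Y = cmat Jmat ** A"
  define j where "j = sqm (cmat Jmat)"
  define a where "a = sqm A"
  have Y: "sqm Y = j * a" by (simp add: Y_def j_def a_def sqm_ops)
  have "sqm_transpose a * j = j * a"
    using arg_cong[OF skew_ham, of sqm] by (simp add: sqm_ops a_def j_def)
  then have "sqm_transpose (j * a) = - (j * a)"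
    using arg_cong[OF transpose_cmat_Jmat, of sqm] by (simp add: sqm_ops sqm_transpose_mult j_def)
  then have "transpose Y = - Y"
    by (metis Y mat_of_ops(4,8) mat_of_sqm)
  note adj = pfaffian_adjugate_identities[OF this]
  have p: "pfaff_char Y = [:coeff (pfaff_char Y) 0, coeff (pfaff_char Y) 1, coeff (pfaff_char Y) 2, -1:]"
    by (simp add: pfaff_char_def numeral_2_eq_2)
  have h0: "- (sqm (pfaff_adj0 Y) * (j * a)) = scal (coeff (pfaff_char Y) 0)"
    using arg_cong[OF adj(1), of sqm] by (simp add: sqm_ops Y)
  have h1: "sqm (pfaff_adj0 Y) * j - sqm (pfaff_adj1 Y) * (j * a) = scal (coeff (pfaff_char Y) 1)"
    using arg_cong[OF adj(2), of sqm] by (simp add: sqm_ops Y j_def)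
  have h2: "sqm (pfaff_adj1 Y) * j - j * (j * a) = scal (coeff (pfaff_char Y) 2)"
    using arg_cong[OF adj(3), of sqm] by (simp add: sqm_ops Y j_def)
  have jj: "j * j = -1"
    using arg_cong[OF cmat_Jmat_squared, of sqm] by (simp add: sqm_ops j_def)
  note resolvent = pfaffian_adjugate_resolvent[OF h0 h1 h2 jj, folded p]
  show "degree (pfaff_char Y) = 3" by (simp add: pfaff_char_def)
  show "peval (pfaff_char Y) (sqm A) = 0" using resolvent(1) by (simp add: a_def)
  fix z assume nz: "poly (pfaff_char Y) z \<noteq> 0"
  define R where "R = scal (1 / poly (pfaff_char Y) z)
    * ((scal (z * z) * j + scal z * sqm (pfaff_adj1 Y) + sqm (pfaff_adj0 Y)) * j)"
  have "R * (scal z - a) = scal (1 / poly (pfaff_char Y) z) * scal (poly (pfaff_char Y) z)"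
    unfolding R_def resolvent(2)[of z, symmetric] by (simp only: mult.assoc)
  also have "\<dots> = 1"
    using nz by (simp flip: scal_mult)
  finally have "mat_of (R * (scal z - a)) = mat 1"
    by simp
  then have "mat_of R ** (mat z - A) = mat 1"
    by (simp add: a_def)
  then show "invertible (mat z - A)"
    using invertible_left_inverse by blast
qed

section \<open>Resolvents of commuting involutions\<close>

lemma involution_resolvent:
  fixes c m e f x :: "'n::finite sqm"
  assumes cc: "c * c = 1" and cm: "c * m = m * c"
    and e: "(1 - scal \<epsilon> * m) * e = 1" and f: "(1 + scal \<epsilon> * m) * f = 1"
    and x: "(1 - scal \<epsilon> * (c * m)) * x = 1"
  shows "x + x = (1 + c) * e + (1 - c) * f"
proof -
  have x': "x * (1 - scal \<epsilon> * (c * m)) = 1" using x by (rule sqm_inverse_commute)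
  have cmc: "c * (m * c) = m" by (metis cc cm mult.assoc mult_1_left)
  have "x * (1 + c) = x * ((1 + c) * (1 - scal \<epsilon> * m)) * e"
    by (simp add: e mult.assoc)
  also have "(1 + c) * (1 - scal \<epsilon> * m) = (1 - scal \<epsilon> * (c * m)) * (1 + c)"
    by (simp add: algebra_simps scal_left_commute cmc)
  also have "x * ((1 - scal \<epsilon> * (c * m)) * (1 + c)) * e = (1 + c) * e"
    unfolding mult.assoc[of x, symmetric] x' by simp
  finally have plus: "x * (1 + c) = (1 + c) * e" .
  have "x * (1 - c) = x * ((1 - c) * (1 + scal \<epsilon> * m)) * f"
    by (simp add: f mult.assoc)
  also have "(1 - c) * (1 + scal \<epsilon> * m) = (1 - scal \<epsilon> * (c * m)) * (1 - c)"
    by (simp add: algebra_simps scal_left_commute cmc)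
  also have "x * ((1 - scal \<epsilon> * (c * m)) * (1 - c)) * f = (1 - c) * f"
    unfolding mult.assoc[of x, symmetric] x' by simp
  finally have minus: "x * (1 - c) = (1 - c) * f" .
  have "x + x = x * (1 + c) + x * (1 - c)" by (simp add: algebra_simps)
  then show ?thesis by (simp add: plus minus)
qed

lemma negated_resolvent:
  fixes c x :: "nat \<Rightarrow> 'n::finite sqm" and m :: "'n sqm"
  assumes cc: "\<And>i. i \<in> {1,2,3} \<Longrightarrow> c i * c i = 1" and csum: "c 1 + c 2 + c 3 = 1"
    and cm: "\<And>i. i \<in> {1,2,3} \<Longrightarrow> c i * m = m * c i"
    and x: "\<And>i. i \<in> {1,2,3} \<Longrightarrow> (1 - scal \<epsilon> * (c i * m)) * x i = 1"
  shows "(1 + scal \<epsilon> * m) * (scal (1/2) * ((1 - c 1) * x 1 + (1 - c 2) * x 2 + (1 - c 3) * x 3)) = 1"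
proof -
  have summand: "(1 + scal \<epsilon> * m) * ((1 - c i) * x i) = 1 - c i" if i: "i \<in> {1,2,3}" for i
  proof -
    have cmc: "c i * (c i * m) = m" by (metis cc[OF i] mult.assoc mult_1_left)
    have "(1 + scal \<epsilon> * m) * (1 - c i) = (1 - c i) * (1 - scal \<epsilon> * (c i * m))"
      by (simp add: algebra_simps scal_left_commute cmc cm[OF i, symmetric])
    then have "(1 + scal \<epsilon> * m) * ((1 - c i) * x i) = (1 - c i) * ((1 - scal \<epsilon> * (c i * m)) * x i)"
      by (simp only: mult.assoc[symmetric])
    then show ?thesis by (simp add: x[OF i])
  qed
  have "(1 - c 1) + (1 - c 2) + (1 - c 3) = 1 + 1 + 1 - (c 1 + c 2 + c 3)"
    by (simp add: algebra_simps)
  also have "\<dots> = scal 2"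
    unfolding csum using scal_add[of 1 1] by simp
  finally have "(1 + scal \<epsilon> * m) * ((1 - c 1) * x 1 + (1 - c 2) * x 2 + (1 - c 3) * x 3) = scal 2"
    using summand[of 1] summand[of 2] summand[of 3] by (simp add: distrib_left)
  then show ?thesis
    by (simp add: scal_left_commute[of "1 + scal \<epsilon> * m"] flip: scal_mult)
qed

lemma sqm_half_double: "scal (1/2) * (y + y) = (y :: 'n::finite sqm)"
proof -
  have "scal (1/2) * (y + y) = scal (1/2 + 1/2) * y"
    by (simp only: scal_add distrib_left distrib_right)
  then show ?thesis by simp
qed

lemma sqm_transpose_inverse_intertwine:
  assumes uj: "sqm_transpose u * j = j * u" and uv: "u * v = 1"
  shows "sqm_transpose v * j = j * v"
proof -
  have vu: "sqm_transpose v * sqm_transpose u = 1"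
    using arg_cong[OF uv, of sqm_transpose] by (simp add: sqm_transpose_mult)
  have "sqm_transpose v * j = sqm_transpose v * j * (u * v)"
    by (simp add: uv)
  also have "\<dots> = sqm_transpose v * (sqm_transpose u * j) * v"
    by (simp only: uj mult.assoc)
  also have "\<dots> = j * v"
    by (simp add: vu flip: mult.assoc)
  finally show ?thesis .
qed

lemma hamiltonian_shift_intertwine:
  assumes "sqm_transpose m * j = - (j * m)"
  shows "sqm_transpose (1 + scal \<delta> * m) * j = j * (1 - scal \<delta> * m)"
  by (simp add: sqm_transpose_add sqm_transpose_mult algebra_simps scal_left_commute assms)

lemma resolvent_sum_decomposition:
  fixes j s e :: "'n::finite sqm" and c x :: "nat \<Rightarrow> 'n sqm"
  assumes jj: "j * j = -1" and trj: "sqm_transpose j = - j" and trs: "sqm_transpose s = s"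
    and cc: "\<And>i. i \<in> {1,2,3} \<Longrightarrow> c i * c i = 1" and csum: "c 1 + c 2 + c 3 = 1"
    and cm: "\<And>i. i \<in> {1,2,3} \<Longrightarrow> c i * (j * s) = (j * s) * c i"
    and e: "(1 - scal \<epsilon> * (j * s)) * e = 1"
    and x: "\<And>i. i \<in> {1,2,3} \<Longrightarrow> (1 - scal \<epsilon> * (c i * (j * s))) * x i = 1"
  shows "\<exists>w. x 1 + x 2 + x 3 = e + w \<and> sqm_transpose (j * w) = - (j * w)"
proof -
  define m where "m = j * s"
  \<comment> \<open>the projections \<open>(1 - c i) / 2\<close> onto the \<open>-1\<close>-eigenspaces sum to \<open>1\<close>\<close>
  define f where "f = scal (1/2) * ((1 - c 1) * x 1 + (1 - c 2) * x 2 + (1 - c 3) * x 3)"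
  have f: "(1 + scal \<epsilon> * m) * f = 1"
    unfolding f_def m_def by (rule negated_resolvent[OF cc csum cm x])
  have e: "(1 - scal \<epsilon> * m) * e = 1" using e by (simp add: m_def)
  have double: "x i + x i = (1 + c i) * e + (1 - c i) * f" if "i \<in> {1,2,3}" for i
    using involution_resolvent[OF cc[OF that] cm[OF that, folded m_def] e f x[OF that, folded m_def]] .
  have c3: "c 3 = 1 - c 1 - c 2" using csum by (simp add: algebra_simps)
  have "(x 1 + x 2 + x 3) + (x 1 + x 2 + x 3) = (x 1 + x 1) + (x 2 + x 2) + (x 3 + x 3)"
    by (simp add: algebra_simps)
  also have "\<dots> = (1 + c 1) * e + (1 - c 1) * f + ((1 + c 2) * e + (1 - c 2) * f)
      + ((1 + c 3) * e + (1 - c 3) * f)"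
    by (simp only: double insert_iff simp_thms)
  also have "\<dots> = (e + (e + f)) + (e + (e + f))"
    by (simp add: c3 algebra_simps mult_2)
  finally have sum: "x 1 + x 2 + x 3 = e + (e + f)"
    by (metis sqm_half_double)
  have e': "e * (1 - scal \<epsilon> * m) = 1" using e by (rule sqm_inverse_commute)
  have "e + f = e * ((1 + scal \<epsilon> * m) * f) + e * (1 - scal \<epsilon> * m) * f"
    by (simp add: f e')
  then have ef: "e + f = e * f + e * f"
    by (simp add: algebra_simps)
  have "(1 + scal \<epsilon> * m) * (1 - scal \<epsilon> * m) * (e * f) = (1 + scal \<epsilon> * m) * ((1 - scal \<epsilon> * m) * e) * f"
    by (simp only: mult.assoc)
  then have uv: "(1 + scal \<epsilon> * m) * (1 - scal \<epsilon> * m) * (e * f) = 1"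
    by (simp add: e f)
  have jjx: "j * (j * y) = - y" for y by (simp add: jj flip: mult.assoc)
  have ham: "sqm_transpose m * j = - (j * m)"
    by (simp add: m_def sqm_transpose_mult trs trj jj jjx mult.assoc)
  note plus = hamiltonian_shift_intertwine[OF ham, of \<epsilon>]
  have minus: "sqm_transpose (1 - scal \<epsilon> * m) * j = j * (1 + scal \<epsilon> * m)"
    using hamiltonian_shift_intertwine[OF ham, of "- \<epsilon>"] by (simp add: scal_minus)
  have "sqm_transpose ((1 + scal \<epsilon> * m) * (1 - scal \<epsilon> * m)) * j
      = sqm_transpose (1 - scal \<epsilon> * m) * (sqm_transpose (1 + scal \<epsilon> * m) * j)"
    by (simp add: sqm_transpose_mult mult.assoc)
  also have "\<dots> = j * ((1 + scal \<epsilon> * m) * (1 - scal \<epsilon> * m))"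
    by (simp only: plus minus flip: mult.assoc)
  finally have "sqm_transpose (e * f) * j = j * (e * f)"
    using uv by (rule sqm_transpose_inverse_intertwine)
  then have "sqm_transpose (j * (e + f)) = - (j * (e + f))"
    by (simp add: ef sqm_transpose_add sqm_transpose_mult trj distrib_left)
  with sum show ?thesis by blast
qed

section \<open>Quadratic forms of the resolvents\<close>

lemma matrix_inv_right: "invertible N \<Longrightarrow> N ** matrix_inv N = mat 1"
  unfolding invertible_def matrix_inv_def by (rule conjunct1, rule someI_ex)

lemma matrix_inv_unique:
  fixes M :: "'a::field^'n^'n"
  assumes "M ** B = mat 1"
  shows "matrix_inv M = B"
proof -
  have "invertible M"
    using assms by (auto simp: invertible_right_inverse)
  then have "matrix_inv M ** M = mat 1"
    by (rule matrix_left_right_inverse1[OF matrix_inv_right])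
  then have "matrix_inv M = matrix_inv M ** (M ** B)" by (simp add: assms)
  also have "\<dots> = B" by (simp add: matrix_mul_assoc \<open>matrix_inv M ** M = mat 1\<close>)
  finally show ?thesis .
qed

lemma cmat_mult: "cmat (X ** Y) = cmat X ** cmat Y"
  by (simp add: cmat_def matrix_matrix_mult_def vec_eq_iff of_real_sum)

lemma cmat_diff: "cmat (X - Y) = cmat X - cmat Y"
  by (simp add: cmat_def vec_eq_iff)

lemma cmat_mat: "cmat (mat r) = mat (of_real r)"
  by (simp add: cmat_def mat_def vec_eq_iff)

lemma cmat_transpose: "cmat (transpose X) = transpose (cmat X)"
  by (simp add: cmat_def transpose_def vec_eq_iff)

lemma cmat_right_inverse: "invertible (N :: real^'n^'n) \<Longrightarrow> cmat N ** cmat (matrix_inv N) = mat 1"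
  by (simp add: matrix_inv_right cmat_mat flip: cmat_mult)

lemma cmat_matrix_inv:
  fixes N :: "real^'n^'n"
  assumes "invertible N"
  shows "cmat (matrix_inv N) = matrix_inv (cmat N)"
  using matrix_inv_unique[OF cmat_right_inverse[OF assms]] by simp

lemma invertible_cmat:
  fixes N :: "real^'n^'n"
  assumes "invertible N"
  shows "invertible (cmat N)"
  unfolding invertible_right_inverse using cmat_right_inverse[OF assms] by blast

lemma qform_add: "qform (M + N) v = qform M v + qform N v"
  by (simp add: qform_def matrix_vector_mult_def sum.distrib distrib_left distrib_right)

lemma qform_skew:
  assumes "transpose N = - N"
  shows "qform N (v :: complex^'n) = 0"
proof -
  have N: "N $ j $ i = - N $ i $ j" for i j
  proof -
    have "transpose N $ i $ j = (- N) $ i $ j" using assms by simp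
    then show ?thesis by (simp add: transpose_def)
  qed
  have pt: "v$i * N$i$j * v$j = - (v$j * N$j$i * v$i)" for i j
    by (simp only: N[of i j]) (simp add: algebra_simps)
  have "qform N v = (\<Sum>i\<in>UNIV. \<Sum>j\<in>UNIV. v$i * N$i$j * v$j)"
    by (simp add: qform_def matrix_vector_mult_def sum_distrib_left mult.assoc)
  also have "\<dots> = (\<Sum>j\<in>UNIV. \<Sum>i\<in>UNIV. v$i * N$i$j * v$j)"
    by (rule sum.swap)
  also have "\<dots> = (\<Sum>j\<in>UNIV. \<Sum>i\<in>UNIV. - (v$j * N$j$i * v$i))"
    by (intro sum.cong refl) (rule pt)
  also have "\<dots> = - (\<Sum>i\<in>UNIV. \<Sum>j\<in>UNIV. v$i * N$i$j * v$j)"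
    by (simp add: sum_negf)
  finally have "qform N v = - qform N v"
    by (simp add: qform_def matrix_vector_mult_def sum_distrib_left mult.assoc)
  then show ?thesis by simp
qed

lemma qform_cmat_cvec: "of_real (qform N v) = qform (cmat N) (cvec v)"
  by (simp add: qform_def matrix_vector_mult_def cmat_def cvec_def)

lemma sum_qform_J_resolvents:
  fixes J S :: "complex^'n::finite^'n" and C :: "nat \<Rightarrow> complex^'n^'n"
  assumes JJ: "J ** J = - mat 1" and J_skew: "transpose J = - J" and S_sym: "transpose S = S"
    and CC: "\<And>i. i \<in> {1,2,3} \<Longrightarrow> C i ** C i = mat 1" and Csum: "C 1 + C 2 + C 3 = mat 1"
    and CJS: "\<And>i. i \<in> {1,2,3} \<Longrightarrow> C i ** (J ** S) = (J ** S) ** C i"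
    and inv0: "invertible (mat 1 - mat \<epsilon> ** (J ** S))"
    and inv: "\<And>i. i \<in> {1,2,3} \<Longrightarrow> invertible (mat 1 - mat \<epsilon> ** (C i ** (J ** S)))"
  shows "(\<Sum>i\<in>{1,2,3}. qform (J ** matrix_inv (mat 1 - mat \<epsilon> ** (C i ** (J ** S)))) v)
       = qform (J ** matrix_inv (mat 1 - mat \<epsilon> ** (J ** S))) v"
proof -
  define j s where "j = sqm J" and "s = sqm S"
  define c where "c i = sqm (C i)" for i
  define e where "e = sqm (matrix_inv (mat 1 - mat \<epsilon> ** (J ** S)))"
  define x where "x i = sqm (matrix_inv (mat 1 - mat \<epsilon> ** (C i ** (J ** S))))" for i
  have "\<exists>w. x 1 + x 2 + x 3 = e + w \<and> sqm_transpose (j * w) = - (j * w)"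
  proof (rule resolvent_sum_decomposition)
    show "j * j = -1" "sqm_transpose j = - j" "sqm_transpose s = s" "c 1 + c 2 + c 3 = 1"
      using arg_cong[OF JJ, of sqm] arg_cong[OF J_skew, of sqm] arg_cong[OF S_sym, of sqm]
        arg_cong[OF Csum, of sqm]
      by (simp_all add: j_def s_def c_def sqm_ops)
    show "c i * c i = 1" "c i * (j * s) = j * s * c i" if "i \<in> {1,2,3}" for i
      using arg_cong[OF CC[OF that], of sqm] arg_cong[OF CJS[OF that], of sqm]
      by (simp_all add: j_def s_def c_def sqm_ops)
    show "(1 - scal \<epsilon> * (j * s)) * e = 1"
      using arg_cong[OF matrix_inv_right[OF inv0], of sqm]
      by (simp add: j_def s_def e_def sqm_ops)
    show "(1 - scal \<epsilon> * (c i * (j * s))) * x i = 1" if "i \<in> {1,2,3}" for i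
      using arg_cong[OF matrix_inv_right[OF inv[OF that]], of sqm]
      by (simp add: j_def s_def c_def x_def sqm_ops)
  qed
  then obtain w where sum: "x 1 + x 2 + x 3 = e + w"
    and skew: "sqm_transpose (j * w) = - (j * w)" by blast
  define Q where "Q y = qform (mat_of (j * y)) v" for y
  have Q_add: "Q (y + z) = Q y + Q z" for y z
    by (simp add: Q_def distrib_left qform_add)
  have "Q w = 0"
    unfolding Q_def by (rule qform_skew) (metis skew mat_of_ops(4,8))
  then have "Q (x 1) + Q (x 2) + Q (x 3) = Q e"
    by (metis Q_add sum add.right_neutral)
  then show ?thesis
    by (simp add: Q_def j_def x_def e_def add.assoc)
qed

section \<open>Jacobi matrices and cubic forms\<close>

lemma bounded_linear_cvec: "bounded_linear (cvec :: real^'n \<Rightarrow> complex^'n)"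
proof -
  have "linear (cvec :: real^'n \<Rightarrow> complex^'n)"
    by (rule linearI; simp add: cvec_def vec_eq_iff; simp add: scaleR_conv_of_real)
  then show ?thesis by (simp add: linear_conv_bounded_linear)
qed

lemma jacobi_linear_comp:
  assumes f: "(f has_derivative D) (at x)" and L: "bounded_linear L"
  shows "jacobi (\<lambda>y. L (f y)) x = (\<chi> i j. L (D (axis j 1)) $ i)"
  using frechet_derivative_at[OF bounded_linear.has_derivative[OF L f], symmetric]
  by (simp add: jacobi_def)

lemma jacobi_matrix_vector_mult:
  fixes M :: "'a::{euclidean_space,real_algebra_1}^'m^'p"
  assumes "f differentiable (at x)"
  shows "jacobi (\<lambda>y. M *v f y) x = M ** jacobi f x"
proof -
  have D: "(f has_derivative frechet_derivative f (at x)) (at x)"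
    using assms by (rule frechet_derivative_works[THEN iffD1])
  show ?thesis
    unfolding jacobi_linear_comp[OF D matrix_vector_mul_bounded_linear]
    by (simp add: vec_eq_iff jacobi_def matrix_vector_mult_def matrix_matrix_mult_def)
qed

lemma jacobi_cvec:
  assumes "f differentiable (at x)"
  shows "jacobi (\<lambda>y. cvec (f y)) x = cmat (jacobi f x)"
proof -
  have D: "(f has_derivative frechet_derivative f (at x)) (at x)"
    using assms by (rule frechet_derivative_works[THEN iffD1])
  show ?thesis
    unfolding jacobi_linear_comp[OF D bounded_linear_cvec]
    by (simp add: vec_eq_iff jacobi_def cvec_def cmat_def)
qed

lemma differentiable_cvec:
  "f differentiable (at x) \<Longrightarrow> (\<lambda>y. cvec (f y)) differentiable (at x)"
  unfolding differentiable_def using bounded_linear.has_derivative[OF bounded_linear_cvec] by blast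

lemma differentiable_matrix_vector_mult:
  fixes M :: "'a::{euclidean_space,real_algebra_1}^'m^'p"
  shows "f differentiable (at x) \<Longrightarrow> (\<lambda>y. M *v f y) differentiable (at x)"
  unfolding differentiable_def
  using bounded_linear.has_derivative[OF matrix_vector_mul_bounded_linear] by blast

lemma has_derivative_vec_nth_at: "((\<lambda>y::real^'n. y$i) has_derivative (\<lambda>h. h$i)) F"
  by (rule bounded_linear.has_derivative[OF bounded_linear_vec_nth has_derivative_ident])

lemma has_derivative_cubic_monomial:
  "((\<lambda>y::real^'n. c * y$i * y$j * y$k) has_derivative
     (\<lambda>h. c * (h$i * y$j * y$k + y$i * h$j * y$k + y$i * y$j * h$k))) (at y)"
  by (rule has_derivative_eq_rhs, (rule has_derivative_mult has_derivative_const has_derivative_vec_nth_at)+)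
    (simp add: fun_eq_iff algebra_simps)

lemma has_derivative_quadratic_monomial:
  "((\<lambda>y::real^'n. (c * (y$j * y$k)) *\<^sub>R (v::real^'m)) has_derivative
     (\<lambda>h. (c * (h$j * y$k + y$j * h$k)) *\<^sub>R v)) (at y)"
  by (rule has_derivative_eq_rhs, (rule has_derivative_scaleR has_derivative_mult has_derivative_const
      has_derivative_vec_nth_at)+) (simp add: fun_eq_iff algebra_simps)

definition cubic_grad :: "('n \<Rightarrow> 'n \<Rightarrow> 'n \<Rightarrow> real) \<Rightarrow> real^'n \<Rightarrow> real^'n" where
  "cubic_grad c y = (\<Sum>i\<in>UNIV. \<Sum>j\<in>UNIV. \<Sum>k\<in>UNIV.
      (c i j k * (y$j * y$k)) *\<^sub>R axis i 1 + (c i j k * (y$i * y$k)) *\<^sub>R axis j 1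
      + (c i j k * (y$i * y$j)) *\<^sub>R axis k 1)"

definition cubic_hess :: "('n \<Rightarrow> 'n \<Rightarrow> 'n \<Rightarrow> real) \<Rightarrow> real^'n \<Rightarrow> real^'n \<Rightarrow> real^'n" where
  "cubic_hess c y h = (\<Sum>i\<in>UNIV. \<Sum>j\<in>UNIV. \<Sum>k\<in>UNIV.
      (c i j k * (h$j * y$k + y$j * h$k)) *\<^sub>R axis i 1 + (c i j k * (h$i * y$k + y$i * h$k)) *\<^sub>R axis j 1
      + (c i j k * (h$i * y$j + y$i * h$j)) *\<^sub>R axis k 1)"

lemma has_derivative_cubic_grad: "(cubic_grad c has_derivative cubic_hess c y) (at y)"
  unfolding cubic_grad_def[abs_def] cubic_hess_def
  by (intro has_derivative_sum has_derivative_add has_derivative_quadratic_monomial)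

lemma axis_nth_commute: "axis i (1::real) $ l = axis l 1 $ i"
  by (simp add: axis_def)

lemma grad_cubic_form:
  fixes c :: "'n::finite \<Rightarrow> 'n \<Rightarrow> 'n \<Rightarrow> real"
  shows "grad (\<lambda>y. \<Sum>i\<in>UNIV. \<Sum>j\<in>UNIV. \<Sum>k\<in>UNIV. c i j k * y$i * y$j * y$k) = cubic_grad c"
proof (rule ext)
  fix y :: "real^'n"
  have "((\<lambda>y. \<Sum>i\<in>UNIV. \<Sum>j\<in>UNIV. \<Sum>k\<in>UNIV. c i j k * y$i * y$j * y$k) has_derivative
      (\<lambda>h. \<Sum>i\<in>UNIV. \<Sum>j\<in>UNIV. \<Sum>k\<in>UNIV.
         c i j k * (h$i * y$j * y$k + y$i * h$j * y$k + y$i * y$j * h$k))) (at y)"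
    by (intro has_derivative_sum has_derivative_cubic_monomial)
  from frechet_derivative_at[OF this, symmetric] show "grad (\<lambda>y. \<Sum>i\<in>UNIV. \<Sum>j\<in>UNIV. \<Sum>k\<in>UNIV. c i j k * y$i * y$j * y$k) y = cubic_grad c y"
    by (simp add: grad_def cubic_grad_def vec_eq_iff sum_component algebra_simps axis_nth_commute)
qed

lemma hesse_cubic_form_symmetric:
  fixes c :: "'n::finite \<Rightarrow> 'n \<Rightarrow> 'n \<Rightarrow> real"
  shows "transpose (hesse (\<lambda>y. \<Sum>i\<in>UNIV. \<Sum>j\<in>UNIV. \<Sum>k\<in>UNIV. c i j k * y$i * y$j * y$k) x)
     = hesse (\<lambda>y. \<Sum>i\<in>UNIV. \<Sum>j\<in>UNIV. \<Sum>k\<in>UNIV. c i j k * y$i * y$j * y$k) x"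
  unfolding hesse_def grad_cubic_form
  using frechet_derivative_at[OF has_derivative_cubic_grad[of c x], symmetric]
  by (simp add: jacobi_def transpose_def vec_eq_iff cubic_hess_def
      sum_component algebra_simps axis_nth_commute)

lemma homog_cubicE:
  assumes "homog_cubic H"
  obtains c where "H = (\<lambda>y. \<Sum>i\<in>UNIV. \<Sum>j\<in>UNIV. \<Sum>k\<in>UNIV. c i j k * y$i * y$j * y$k)"
  using assms unfolding homog_cubic_def by fast

lemma homog_cubic_grad_differentiable:
  assumes "homog_cubic H"
  shows "grad H differentiable (at x)"
proof -
  obtain c where "H = (\<lambda>y. \<Sum>i\<in>UNIV. \<Sum>j\<in>UNIV. \<Sum>k\<in>UNIV. c i j k * y$i * y$j * y$k)"
    using assms by (rule homog_cubicE)
  then show ?thesis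
    using has_derivative_cubic_grad by (auto simp: grad_cubic_form intro: differentiableI)
qed

lemma homog_cubic_hesse_symmetric:
  assumes "homog_cubic H"
  shows "transpose (hesse H x) = hesse H x"
proof -
  obtain c where "H = (\<lambda>y. \<Sum>i\<in>UNIV. \<Sum>j\<in>UNIV. \<Sum>k\<in>UNIV. c i j k * y$i * y$j * y$k)"
    using assms by (rule homog_cubicE)
  then show ?thesis by (simp add: hesse_cubic_form_symmetric)
qed

lemma jacobi_gradient_fields:
  fixes M :: "real^6^6" and B :: "complex^6^6"
  assumes "homog_cubic H" and f: "f = (\<lambda>y. M *v grad H y)" and g: "g = (\<lambda>y. B *v cvec (f y))"
  shows "jacobi f x = M ** hesse H x" and "jacobi g x = B ** cmat (M ** hesse H x)"
proof -
  have dH: "grad H differentiable (at x)"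
    using assms(1) by (rule homog_cubic_grad_differentiable)
  have df: "f differentiable (at x)"
    unfolding f using dH by (rule differentiable_matrix_vector_mult)
  show jf: "jacobi f x = M ** hesse H x"
    unfolding f hesse_def using dH by (rule jacobi_matrix_vector_mult)
  show "jacobi g x = B ** cmat (M ** hesse H x)"
    unfolding g jacobi_matrix_vector_mult[OF differentiable_cvec[OF df]] jacobi_cvec[OF df] jf ..
qed

lemma skew_hamiltonian_interpolating_involutions:
  fixes A :: "real^6^6" and lam al be ga :: "nat \<Rightarrow> complex" and Bm :: "nat \<Rightarrow> complex^6^6"
  assumes skew_ham: "transpose A ** Jmat = Jmat ** A"
    and distinct: "lam 1 \<noteq> lam 2" "lam 1 \<noteq> lam 3" "lam 2 \<noteq> lam 3"
    and charpoly: "\<And>z::complex. det (mat z - cmat A) = ((z - lam 1) * (z - lam 2) * (z - lam 3))\<^sup>2"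
    and interp: "\<And>i k. i \<in> {1,2,3} \<Longrightarrow> k \<in> {1,2,3} \<Longrightarrow>
        al i + be i * lam k + ga i * (lam k)\<^sup>2 = (if k = i then -1 else 1)"
    and B_def: "\<And>i. Bm i = mat (al i) + mat (be i) ** cmat A + mat (ga i) ** (cmat A ** cmat A)"
  shows "i \<in> {1,2,3} \<Longrightarrow> transpose (Bm i) ** transpose (Bm i) = mat 1"
    and "transpose (Bm 1) + transpose (Bm 2) + transpose (Bm 3) = mat 1"
    and "A ** S = S ** transpose A \<Longrightarrow>
      transpose (Bm i) ** (cmat Jmat ** cmat S) = (cmat Jmat ** cmat S) ** transpose (Bm i)"
proof -
  define a j where "a = sqm (cmat A)" and "j = sqm (cmat Jmat)"
  have b: "sqm (Bm i) = peval [:al i, be i, ga i:] a" for i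
    by (simp add: B_def a_def sqm_ops peval_pCons algebra_simps scal_mult_commute)
  have aj: "sqm_transpose a * j = j * a"
    using arg_cong[OF skew_ham, of "\<lambda>M. sqm (cmat M)"] by (simp add: a_def j_def sqm_ops cmat_mult cmat_transpose)
  have "transpose (cmat A) ** cmat Jmat = cmat Jmat ** cmat A"
    using arg_cong[OF skew_ham, of cmat] by (simp add: cmat_mult cmat_transpose)
  then obtain p where p: "degree p = 3" "peval p (sqm (cmat A)) = 0"
    "\<And>z. poly p z \<noteq> 0 \<Longrightarrow> invertible (mat z - cmat A)"
    using skew_hamiltonian_annihilating_cubic by blast
  have roots: "poly p (lam k) = 0" if "k \<in> {1,2,3}" for k
    using p(3)[of "lam k"] charpoly[of "lam k"] that by (auto simp: invertible_det_nz)
  show "transpose (Bm i) ** transpose (Bm i) = mat 1" if "i \<in> {1,2,3}"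
  proof -
    have "sqm (Bm i) * sqm (Bm i) = 1"
      unfolding b by (rule interpolating_involutions(1)[OF p(1,2)[folded a_def] _ distinct _ that]) (simp_all add: roots interp)
    then have "mat_of (sqm_transpose (sqm (Bm i) * sqm (Bm i))) = mat 1" by simp
    then show ?thesis by (simp add: sqm_transpose_mult)
  qed
  have "sqm (Bm 1) + sqm (Bm 2) + sqm (Bm 3) = 1"
    unfolding b by (rule interpolating_involutions(2)[OF p(1,2)[folded a_def] _ distinct]) (simp_all add: roots interp)
  then have "mat_of (sqm_transpose (sqm (Bm 1) + sqm (Bm 2) + sqm (Bm 3))) = mat 1" by simp
  then show "transpose (Bm 1) + transpose (Bm 2) + transpose (Bm 3) = mat 1"
    by (simp add: sqm_transpose_add)
  assume "A ** S = S ** transpose A"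
  then have "sqm (cmat (A ** S)) = sqm (cmat (S ** transpose A))"
    by simp
  then have "a * sqm (cmat S) = sqm (cmat S) * sqm_transpose a"
    by (simp add: a_def sqm_ops cmat_mult cmat_transpose)
  then have bs: "sqm (Bm i) * sqm (cmat S) = sqm (cmat S) * sqm_transpose (sqm (Bm i))"
    by (simp add: b sqm_transpose_peval peval_intertwine)
  have cj: "sqm_transpose (sqm (Bm i)) * j = j * sqm (Bm i)"
    using aj by (simp add: b sqm_transpose_peval peval_intertwine)
  have "sqm_transpose (sqm (Bm i)) * (j * sqm (cmat S)) = j * (sqm (Bm i) * sqm (cmat S))"
    by (simp only: cj flip: mult.assoc)
  also have "\<dots> = (j * sqm (cmat S)) * sqm_transpose (sqm (Bm i))"
    by (simp only: bs mult.assoc)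
  finally have "mat_of (sqm_transpose (sqm (Bm i)) * (j * sqm (cmat S)))
      = mat_of ((j * sqm (cmat S)) * sqm_transpose (sqm (Bm i)))"
    by (rule arg_cong)
  then show "transpose (Bm i) ** (cmat Jmat ** cmat S) = (cmat Jmat ** cmat S) ** transpose (Bm i)"
    by (simp add: j_def)
qed

theorem mainTheorem11:
  fixes A :: "real^6^6" and H0 :: "real^6 \<Rightarrow> real"
    and lam :: "nat \<Rightarrow> complex" and al be ga :: "nat \<Rightarrow> complex"
    and Bm :: "nat \<Rightarrow> complex^6^6" and g :: "nat \<Rightarrow> real^6 \<Rightarrow> complex^6"
    and f0 :: "real^6 \<Rightarrow> real^6"
    and x :: "real^6" and \<epsilon> :: real
  assumes skewHam: "transpose A ** Jmat = Jmat ** A"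
    and cubic: "homog_cubic H0"
    and hess_comm: "\<And>y. A ** hesse H0 y = hesse H0 y ** transpose A"
    and f0_def: "f0 = (\<lambda>y. Jmat *v grad H0 y)"
    and distinct: "lam 1 \<noteq> lam 2" "lam 1 \<noteq> lam 3" "lam 2 \<noteq> lam 3"
    and charpoly: "\<And>z::complex. det (mat z - cmat A) = ((z - lam 1) * (z - lam 2) * (z - lam 3))\<^sup>2"
    and interp: "\<And>i k. i \<in> {1,2,3} \<Longrightarrow> k \<in> {1,2,3} \<Longrightarrow>
        al i + be i * lam k + ga i * (lam k)\<^sup>2 = (if k = i then -1 else 1)"
    and B_def: "\<And>i. Bm i = mat (al i) + mat (be i) ** cmat A + mat (ga i) ** (cmat A ** cmat A)"
    and g_def: "\<And>i. g i = (\<lambda>y. transpose (Bm i) *v cvec (f0 y))"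
    and eps: "\<epsilon> \<noteq> 0"
    and invH: "invertible (mat 1 - mat \<epsilon> ** jacobi f0 x)"
    and invK: "\<And>i. i \<in> {1,2,3} \<Longrightarrow> invertible (mat 1 - mat (complex_of_real \<epsilon>) ** jacobi (g i) x)"
  shows "(\<Sum>i\<in>{1,2,3}. qform (cmat Jmat ** matrix_inv (mat 1 - mat (complex_of_real \<epsilon>) ** jacobi (g i) x)) (cvec x)
              / complex_of_real \<epsilon>)
         = complex_of_real (qform (Jmat ** matrix_inv (mat 1 - mat \<epsilon> ** jacobi f0 x)) x / \<epsilon>)"
proof -
  define S where "S = hesse H0 x"
  have jf0: "jacobi f0 x = Jmat ** S"
    unfolding S_def using cubic f0_def g_def by (rule jacobi_gradient_fields(1))
  have jg: "jacobi (g i) x = transpose (Bm i) ** (cmat Jmat ** cmat S)" for i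
    unfolding S_def cmat_mult[symmetric] using cubic f0_def g_def by (rule jacobi_gradient_fields(2))
  note B = skew_hamiltonian_interpolating_involutions[OF skewHam distinct charpoly _ B_def]
  have CC: "transpose (Bm i) ** transpose (Bm i) = mat 1" if "i \<in> {1,2,3}" for i
    by (rule B(1)[OF _ that]) (simp add: interp)
  have Csum: "transpose (Bm 1) + transpose (Bm 2) + transpose (Bm 3) = mat 1"
    by (rule B(2)) (simp add: interp)
  have CM: "transpose (Bm i) ** (cmat Jmat ** cmat S) = (cmat Jmat ** cmat S) ** transpose (Bm i)" for i
    by (rule B(3)[OF _ hess_comm[of x, folded S_def]]) (simp add: interp)
  have key: "(\<Sum>i\<in>{1,2,3}. qform (cmat Jmat ** matrix_inv (mat 1 - mat (of_real \<epsilon>) ** jacobi (g i) x)) (cvec x))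
      = qform (cmat Jmat ** matrix_inv (mat 1 - mat (of_real \<epsilon>) ** (cmat Jmat ** cmat S))) (cvec x)"
    unfolding jg
  proof (rule sum_qform_J_resolvents)
    show "transpose (cmat S) = cmat S"
      using homog_cubic_hesse_symmetric[OF cubic] by (simp add: S_def flip: cmat_transpose)
    show "invertible (mat 1 - mat (of_real \<epsilon>) ** (cmat Jmat ** cmat S))"
      using invertible_cmat[OF invH] by (simp add: jf0 cmat_diff cmat_mat cmat_mult)
  qed (use CC Csum CM invK jg cmat_Jmat_squared transpose_cmat_Jmat in simp_all)
  have cinv: "cmat (matrix_inv (mat 1 - mat \<epsilon> ** jacobi f0 x))
      = matrix_inv (mat 1 - mat (of_real \<epsilon>) ** (cmat Jmat ** cmat S))"
    unfolding cmat_matrix_inv[OF invH] by (simp add: jf0 cmat_diff cmat_mat cmat_mult)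
  show ?thesis
    by (simp only: sum_divide_distrib[symmetric] key of_real_divide qform_cmat_cvec cmat_mult cinv)
qed

end
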